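(* Let $Y$ be a complete geodesic CAT(0) space. For every finite weighted graph $(C,m)$, $\lambda^{Gro}(C,Y)\le\lambda(C,Y)$, with equality when $Y$ is Euclidean.
   Context: For a finite graph $C$ a weight is a positive function $m$ on edges, vertices and $\emptyset$ with $m(c)=\sum_{e\ni c}m(e)$ and $m(\emptyset)=\sum_c m(c)$. For $g:C^0\to Y$: $E(g)=\sum_{\text{edges }e}m(e)d(g(\mathrm{ori}\,e),g(\mathrm{ext}\,e))^2$; $\mathrm{bar}(g)$ is the unique minimizer of $y\mapsto\sum_c m(c)d(g(c),y)^2$; $RQ(g)=E(g)/\sum_c m(c)d(g(c),\mathrm{bar}(g))^2$ and $\lambda(C,Y)=\inf RQ(g)$ over non-constant $g$. Gromov's version: $F(g)=\frac{1}{2m(\emptyset)}\sum_{c,c'}m(c)m(c')d(g(c),g(c'))^2$ (sum over ordered pairs of vertices), $RQ^{Gro}(g)=E(g)/F(g)$, and $\lambda^{Gro}(C,Y)=\inf RQ^{Gro}(g)$ over non-constant $g$. *)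

theory Defs
  imports "HOL-Analysis.Analysis"
begin

definition geodesic_seg :: "'y::metric_space set \<Rightarrow> (real \<Rightarrow> 'y) \<Rightarrow> 'y \<Rightarrow> 'y \<Rightarrow> bool" where
  "geodesic_seg Y \<gamma> x y \<longleftrightarrow>
     \<gamma> 0 = x \<and> \<gamma> (dist x y) = y \<and> \<gamma> ` {0..dist x y} \<subseteq> Y \<and>
     (\<forall>s\<in>{0..dist x y}. \<forall>t\<in>{0..dist x y}. dist (\<gamma> s) (\<gamma> t) = \<bar>s - t\<bar>)"

definition geodesic_space :: "'y::metric_space set \<Rightarrow> bool" where
  "geodesic_space Y \<longleftrightarrow> (\<forall>x\<in>Y. \<forall>y\<in>Y. \<exists>\<gamma>. geodesic_seg Y \<gamma> x y)"

text \<open>Pairs (point on the side [x,y] of a geodesic triangle, corresponding point on the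
  side [a,b] of the Euclidean comparison triangle in the plane).\<close>
definition side_pairs :: "(real \<Rightarrow> 'y::metric_space) \<Rightarrow> 'y \<Rightarrow> 'y \<Rightarrow> (real^2) \<Rightarrow> (real^2) \<Rightarrow> ('y \<times> (real^2)) set" where
  "side_pairs \<gamma> x y a b = {(\<gamma> t, a + (t / dist x y) *\<^sub>R (b - a)) | t. t \<in> {0..dist x y}}"

definition CAT0 :: "'y::metric_space set \<Rightarrow> bool" where
  "CAT0 Y \<longleftrightarrow>
    (\<forall>x1 x2 x3 \<gamma>12 \<gamma>23 \<gamma>31 (a1::real^2) a2 a3.
       x1 \<in> Y \<and> x2 \<in> Y \<and> x3 \<in> Y \<and>
       geodesic_seg Y \<gamma>12 x1 x2 \<and> geodesic_seg Y \<gamma>23 x2 x3 \<and> geodesic_seg Y \<gamma>31 x3 x1 \<and>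
       dist a1 a2 = dist x1 x2 \<and> dist a2 a3 = dist x2 x3 \<and> dist a3 a1 = dist x3 x1 \<longrightarrow>
       (let S = side_pairs \<gamma>12 x1 x2 a1 a2 \<union> side_pairs \<gamma>23 x2 x3 a2 a3 \<union> side_pairs \<gamma>31 x3 x1 a3 a1
        in \<forall>p\<in>S. \<forall>q\<in>S. dist (fst p) (fst q) \<le> dist (snd p) (snd q)))"

definition complete_geodesic_CAT0 :: "'y::metric_space set \<Rightarrow> bool" where
  "complete_geodesic_CAT0 Y \<longleftrightarrow> Y \<noteq> {} \<and> complete Y \<and> geodesic_space Y \<and> CAT0 Y"

definition vweight :: "'e set \<Rightarrow> ('e \<Rightarrow> 'v) \<Rightarrow> ('e \<Rightarrow> 'v) \<Rightarrow> ('e \<Rightarrow> real) \<Rightarrow> 'v \<Rightarrow> real" where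
  "vweight Ed ori ext mE c = (\<Sum>e\<in>{e\<in>Ed. ori e = c \<or> ext e = c}. mE e)"

definition tweight :: "'v set \<Rightarrow> 'e set \<Rightarrow> ('e \<Rightarrow> 'v) \<Rightarrow> ('e \<Rightarrow> 'v) \<Rightarrow> ('e \<Rightarrow> real) \<Rightarrow> real" where
  "tweight V Ed ori ext mE = (\<Sum>c\<in>V. vweight Ed ori ext mE c)"

definition weighted_graph :: "'v set \<Rightarrow> 'e set \<Rightarrow> ('e \<Rightarrow> 'v) \<Rightarrow> ('e \<Rightarrow> 'v) \<Rightarrow> ('e \<Rightarrow> real) \<Rightarrow> bool" where
  "weighted_graph V Ed ori ext mE \<longleftrightarrow>
     finite V \<and> finite Ed \<and> V \<noteq> {} \<and>
     (\<forall>e\<in>Ed. ori e \<in> V \<and> ext e \<in> V) \<and>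
     (\<forall>e\<in>Ed. mE e > 0) \<and>
     (\<forall>c\<in>V. vweight Ed ori ext mE c > 0)"

definition energy :: "'e set \<Rightarrow> ('e \<Rightarrow> 'v) \<Rightarrow> ('e \<Rightarrow> 'v) \<Rightarrow> ('e \<Rightarrow> real) \<Rightarrow> ('v \<Rightarrow> 'y::metric_space) \<Rightarrow> real" where
  "energy Ed ori ext mE g = (\<Sum>e\<in>Ed. mE e * (dist (g (ori e)) (g (ext e)))\<^sup>2)"

definition bar :: "'y::metric_space set \<Rightarrow> 'v set \<Rightarrow> 'e set \<Rightarrow> ('e \<Rightarrow> 'v) \<Rightarrow> ('e \<Rightarrow> 'v) \<Rightarrow> ('e \<Rightarrow> real) \<Rightarrow> ('v \<Rightarrow> 'y) \<Rightarrow> 'y" where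
  "bar Y V Ed ori ext mE g =
     (THE y. y \<in> Y \<and> (\<forall>z\<in>Y.
        (\<Sum>c\<in>V. vweight Ed ori ext mE c * (dist (g c) y)\<^sup>2)
          \<le> (\<Sum>c\<in>V. vweight Ed ori ext mE c * (dist (g c) z)\<^sup>2)))"

definition RQ :: "'y::metric_space set \<Rightarrow> 'v set \<Rightarrow> 'e set \<Rightarrow> ('e \<Rightarrow> 'v) \<Rightarrow> ('e \<Rightarrow> 'v) \<Rightarrow> ('e \<Rightarrow> real) \<Rightarrow> ('v \<Rightarrow> 'y) \<Rightarrow> real" where
  "RQ Y V Ed ori ext mE g = energy Ed ori ext mE g /
     (\<Sum>c\<in>V. vweight Ed ori ext mE c * (dist (g c) (bar Y V Ed ori ext mE g))\<^sup>2)"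

definition Fgro :: "'v set \<Rightarrow> 'e set \<Rightarrow> ('e \<Rightarrow> 'v) \<Rightarrow> ('e \<Rightarrow> 'v) \<Rightarrow> ('e \<Rightarrow> real) \<Rightarrow> ('v \<Rightarrow> 'y::metric_space) \<Rightarrow> real" where
  "Fgro V Ed ori ext mE g = 1 / (2 * tweight V Ed ori ext mE) *
     (\<Sum>c\<in>V. \<Sum>c'\<in>V. vweight Ed ori ext mE c * vweight Ed ori ext mE c' * (dist (g c) (g c'))\<^sup>2)"

definition RQgro :: "'v set \<Rightarrow> 'e set \<Rightarrow> ('e \<Rightarrow> 'v) \<Rightarrow> ('e \<Rightarrow> 'v) \<Rightarrow> ('e \<Rightarrow> real) \<Rightarrow> ('v \<Rightarrow> 'y::metric_space) \<Rightarrow> real" where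
  "RQgro V Ed ori ext mE g = energy Ed ori ext mE g / Fgro V Ed ori ext mE g"

definition nonconst_map :: "'y set \<Rightarrow> 'v set \<Rightarrow> ('v \<Rightarrow> 'y) \<Rightarrow> bool" where
  "nonconst_map Y V g \<longleftrightarrow> g ` V \<subseteq> Y \<and> (\<exists>c\<in>V. \<exists>c'\<in>V. g c \<noteq> g c')"

definition lambda_spec :: "'v set \<Rightarrow> 'e set \<Rightarrow> ('e \<Rightarrow> 'v) \<Rightarrow> ('e \<Rightarrow> 'v) \<Rightarrow> ('e \<Rightarrow> real) \<Rightarrow> 'y::metric_space set \<Rightarrow> real" where
  "lambda_spec V Ed ori ext mE Y = Inf {RQ Y V Ed ori ext mE g | g. nonconst_map Y V g}"

definition lambda_gro :: "'v set \<Rightarrow> 'e set \<Rightarrow> ('e \<Rightarrow> 'v) \<Rightarrow> ('e \<Rightarrow> 'v) \<Rightarrow> ('e \<Rightarrow> real) \<Rightarrow> 'y::metric_space set \<Rightarrow> real" where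
  "lambda_gro V Ed ori ext mE Y = Inf {RQgro V Ed ori ext mE g | g. nonconst_map Y V g}"

end

theory Submission
  imports Defs
begin

(* In a CAT(0) space the comparison triangles make z \<mapsto> d(x, z)^2 at least as convex along
   geodesics as in the Euclidean plane. Hence the weighted sum
   F(z) = \<Sum>_c m(c) d(g c, z)^2 is uniformly convex: minimizing sequences are Cauchy, so by
   completeness F has a minimizer b = bar(g), and b satisfies the variance inequality
   F(b) + m(\<emptyset>) d(b, z)^2 \<le> F(z). Taking z = g(c') and averaging over c' with weights m(c')
   gives 2 m(\<emptyset>) F(b) \<le> \<Sum>_{c,c'} m(c) m(c') d(g c, g c')^2, i.e. the denominator of RQ(g) is
   at most F^Gro(g), whence RQ^Gro(g) \<le> RQ(g). In a Euclidean space the barycenter is the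
   weighted mean and the variance inequality is an identity, so the two quotients agree. *)

lemma dist_segment_point_squared:
  fixes a1 a2 a3 :: "'a::real_inner"
  shows "(dist (a1 + t *\<^sub>R (a2 - a1)) a3)\<^sup>2
           = (1 - t) * (dist a3 a1)\<^sup>2 + t * (dist a3 a2)\<^sup>2 - t * (1 - t) * (dist a1 a2)\<^sup>2"
  by (simp add: dist_norm power2_norm_eq_inner inner_diff_left inner_diff_right
      inner_add_left inner_add_right inner_commute algebra_simps)

lemma dist_vec2: "dist (a::real^2) b = sqrt ((a$1 - b$1)\<^sup>2 + (a$2 - b$2)\<^sup>2)"
  by (simp add: dist_vec_def L2_set_def sum_2 dist_real_def)

lemma comparison_triangle_exists:
  assumes "p \<ge> 0" "q \<ge> 0" "r \<ge> 0" "q \<le> p + r" "p \<le> q + r" "r \<le> p + q"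
  shows "\<exists>a1 a2 a3::real^2. dist a1 a2 = p \<and> dist a2 a3 = q \<and> dist a3 a1 = r"
proof (cases "p = 0")
  case True
  then have "q = r" using assms by linarith
  then show ?thesis using True assms
    by (intro exI[of _ "vector [0,0]"] exI[of _ "vector [r,0]"]) (simp add: dist_vec2)
next
  case False
  then have p: "p > 0" using assms by simp
  \<comment> \<open>vertices (0,0), (p,0), (u,v), where u is the foot of the altitude from the third vertex\<close>
  define u where "u = (r\<^sup>2 + p\<^sup>2 - q\<^sup>2) / (2*p)"
  define v where "v = sqrt (r\<^sup>2 - u\<^sup>2)"
  have "(r - p)\<^sup>2 \<le> q\<^sup>2" and "q\<^sup>2 \<le> (r + p)\<^sup>2"
    using assms abs_le_square_iff[of "r - p" q] by (auto simp: abs_le_iff intro: power_mono)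
  then have "\<bar>r\<^sup>2 + p\<^sup>2 - q\<^sup>2\<bar> \<le> 2*p*r" by (simp add: power2_eq_square algebra_simps abs_le_iff)
  then have "\<bar>u\<bar> \<le> r" using p by (simp add: u_def abs_divide field_simps)
  then have v2: "v\<^sup>2 = r\<^sup>2 - u\<^sup>2"
    using assms(3) by (simp add: v_def abs_le_square_iff[symmetric])
  have "(p - u)\<^sup>2 + v\<^sup>2 = q\<^sup>2" using v2 p by (simp add: u_def power2_eq_square field_simps)
  then have "dist (vector [0,0] :: real^2) (vector [p,0]) = p"
    and "dist (vector [p,0] :: real^2) (vector [u,v]) = q"
    and "dist (vector [u,v] :: real^2) (vector [0,0]) = r"
    using p v2 assms by (simp_all add: dist_vec2 real_sqrt_unique)
  then show ?thesis by blast
qed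

lemma CAT0D:
  assumes "CAT0 Y" "x1 \<in> Y" "x2 \<in> Y" "x3 \<in> Y"
    "geodesic_seg Y g12 x1 x2" "geodesic_seg Y g23 x2 x3" "geodesic_seg Y g31 x3 x1"
    "dist (a1::real^2) a2 = dist x1 x2" "dist a2 a3 = dist x2 x3" "dist a3 a1 = dist x3 x1"
    "p \<in> side_pairs g12 x1 x2 a1 a2 \<union> side_pairs g23 x2 x3 a2 a3 \<union> side_pairs g31 x3 x1 a3 a1"
    "q \<in> side_pairs g12 x1 x2 a1 a2 \<union> side_pairs g23 x2 x3 a2 a3 \<union> side_pairs g31 x3 x1 a3 a1"
  shows "dist (fst p) (fst q) \<le> dist (snd p) (snd q)"
  using assms unfolding CAT0_def Let_def by blast

lemma geodesic_seg_point_in: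
  assumes "geodesic_seg Y \<gamma> b z" "0 \<le> t" "t \<le> 1"
  shows "\<gamma> (t * dist b z) \<in> Y"
proof -
  have "t * dist b z \<in> {0..dist b z}" using assms(2,3) by (simp add: mult_left_le_one_le)
  then show ?thesis using assms(1) unfolding geodesic_seg_def by blast
qed

lemma CAT0_dist_geodesic_squared_le:
  assumes cat: "CAT0 Y" and geo: "geodesic_space Y" and x: "x \<in> Y" and b: "b \<in> Y" and z: "z \<in> Y"
    and \<gamma>: "geodesic_seg Y \<gamma> b z" and t: "0 \<le> t" "t \<le> 1"
  shows "(dist x (\<gamma> (t * dist b z)))\<^sup>2
           \<le> (1 - t) * (dist x b)\<^sup>2 + t * (dist x z)\<^sup>2 - t * (1 - t) * (dist b z)\<^sup>2"
proof -
  obtain \<gamma>' \<gamma>'' where \<gamma>': "geodesic_seg Y \<gamma>' z x" and \<gamma>'': "geodesic_seg Y \<gamma>'' x b"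
    using geo x b z unfolding geodesic_space_def by blast
  obtain a1 a2 a3 :: "real^2"
    where a: "dist a1 a2 = dist b z" "dist a2 a3 = dist z x" "dist a3 a1 = dist x b"
    using comparison_triangle_exists[of "dist b z" "dist z x" "dist x b"]
    by (metis dist_commute dist_triangle zero_le_dist)
  define s where "s = t * dist b z"
  have "s \<in> {0..dist b z}" using t by (simp add: s_def mult_left_le_one_le)
  then have "(\<gamma> s, a1 + (s / dist b z) *\<^sub>R (a2 - a1)) \<in> side_pairs \<gamma> b z a1 a2"
    unfolding side_pairs_def by blast
  moreover have "(\<gamma>'' 0, a3 + (0 / dist x b) *\<^sub>R (a1 - a3)) \<in> side_pairs \<gamma>'' x b a3 a1"
    unfolding side_pairs_def by force
  moreover have "\<gamma>'' 0 = x" using \<gamma>'' unfolding geodesic_seg_def by blast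
  ultimately have "dist (\<gamma> s) x \<le> dist (a1 + (s / dist b z) *\<^sub>R (a2 - a1)) a3"
    using CAT0D[OF cat b z x \<gamma> \<gamma>' \<gamma>'' a] by fastforce
  also have "a1 + (s / dist b z) *\<^sub>R (a2 - a1) = a1 + t *\<^sub>R (a2 - a1)"
    using a(1) by (cases "b = z") (simp_all add: s_def)
  finally have "(dist x (\<gamma> s))\<^sup>2 \<le> (dist (a1 + t *\<^sub>R (a2 - a1)) a3)\<^sup>2"
    by (simp add: dist_commute power_mono)
  also have "\<dots> = (1 - t) * (dist x b)\<^sup>2 + t * (dist x z)\<^sup>2 - t * (1 - t) * (dist b z)\<^sup>2"
    unfolding dist_segment_point_squared using a by (simp add: dist_commute)
  finally show ?thesis by (simp add: s_def)
qed

definition sqdist_sum :: "'v set \<Rightarrow> ('v \<Rightarrow> real) \<Rightarrow> ('v \<Rightarrow> 'y::metric_space) \<Rightarrow> 'y \<Rightarrow> real" where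
  "sqdist_sum V w g z = (\<Sum>c\<in>V. w c * (dist (g c) z)\<^sup>2)"

lemma sqdist_sum_nonneg: "(\<And>c. c \<in> V \<Longrightarrow> w c \<ge> 0) \<Longrightarrow> sqdist_sum V w g z \<ge> 0"
  unfolding sqdist_sum_def by (intro sum_nonneg) auto

lemma sqdist_sum_geodesic_le:
  assumes cat: "CAT0 Y" and geo: "geodesic_space Y" and g: "g ` V \<subseteq> Y"
    and w: "\<And>c. c \<in> V \<Longrightarrow> w c \<ge> 0"
    and b: "b \<in> Y" and z: "z \<in> Y" and \<gamma>: "geodesic_seg Y \<gamma> b z" and t: "0 \<le> t" "t \<le> 1"
  shows "sqdist_sum V w g (\<gamma> (t * dist b z))
           \<le> (1 - t) * sqdist_sum V w g b + t * sqdist_sum V w g z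
             - t * (1 - t) * sum w V * (dist b z)\<^sup>2"
proof -
  have "sqdist_sum V w g (\<gamma> (t * dist b z)) \<le>
     (\<Sum>c\<in>V. w c * ((1 - t) * (dist (g c) b)\<^sup>2 + t * (dist (g c) z)\<^sup>2 - t * (1 - t) * (dist b z)\<^sup>2))"
    unfolding sqdist_sum_def using g w
    by (intro sum_mono mult_left_mono CAT0_dist_geodesic_squared_le[OF cat geo _ b z \<gamma> t]) auto
  also have "\<dots> = (1 - t) * sqdist_sum V w g b + t * sqdist_sum V w g z
                   - t * (1 - t) * sum w V * (dist b z)\<^sup>2"
    unfolding sqdist_sum_def
    by (simp add: algebra_simps sum.distrib sum_subtractf sum_distrib_left sum_distrib_right)
  finally show ?thesis .
qed

lemma sqdist_sum_dist_squared_le: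
  assumes cat: "CAT0 Y" and geo: "geodesic_space Y" and g: "g ` V \<subseteq> Y"
    and w: "\<And>c. c \<in> V \<Longrightarrow> w c \<ge> 0"
    and lower: "\<And>z. z \<in> Y \<Longrightarrow> I \<le> sqdist_sum V w g z" and y: "y \<in> Y" "y' \<in> Y"
  shows "sum w V * (dist y y')\<^sup>2 \<le> 2 * (sqdist_sum V w g y - I) + 2 * (sqdist_sum V w g y' - I)"
proof -
  obtain \<gamma> where \<gamma>: "geodesic_seg Y \<gamma> y y'" using geo y unfolding geodesic_space_def by blast
  let ?m = "\<gamma> ((1/2) * dist y y')"
  have "I \<le> sqdist_sum V w g ?m"
    using lower geodesic_seg_point_in[OF \<gamma>, of "1/2"] by simp
  also have "\<dots> \<le> (1 - 1/2) * sqdist_sum V w g y + (1/2) * sqdist_sum V w g y'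
                   - (1/2) * (1 - 1/2) * sum w V * (dist y y')\<^sup>2"
    using sqdist_sum_geodesic_le[where w=w and t="1/2", OF cat geo g w y \<gamma>] by simp
  finally show ?thesis by simp
qed

lemma Cauchy_of_dist_squared_le:
  fixes y :: "nat \<Rightarrow> 'a::metric_space"
  assumes a: "a \<longlonglongrightarrow> 0" and le: "\<And>m n. (dist (y m) (y n))\<^sup>2 \<le> a m + a n"
  shows "Cauchy y"
proof (rule metric_CauchyI)
  fix e :: real assume e: "e > 0"
  then have "eventually (\<lambda>n. a n < e\<^sup>2 / 2) sequentially"
    using order_tendstoD(2)[OF a, of "e\<^sup>2 / 2"] by simp
  then obtain N where N: "\<And>n. n \<ge> N \<Longrightarrow> a n < e\<^sup>2 / 2"
    unfolding eventually_sequentially by blast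
  have "dist (y m) (y n) < e" if "m \<ge> N" "n \<ge> N" for m n
  proof -
    have "(dist (y m) (y n))\<^sup>2 < e\<^sup>2" using le[of m n] N[OF that(1)] N[OF that(2)] by linarith
    then show ?thesis using e by (simp add: power_less_imp_less_base)
  qed
  then show "\<exists>M. \<forall>m\<ge>M. \<forall>n\<ge>M. dist (y m) (y n) < e" by blast
qed

lemma sqdist_sum_has_minimizer:
  assumes cY: "complete Y" and geo: "geodesic_space Y" and cat: "CAT0 Y" and ne: "Y \<noteq> {}"
    and g: "g ` V \<subseteq> Y" and w: "\<And>c. c \<in> V \<Longrightarrow> w c \<ge> 0" and W: "sum w V > 0"
  shows "\<exists>b\<in>Y. \<forall>z\<in>Y. sqdist_sum V w g b \<le> sqdist_sum V w g z"
proof -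
  define F where "F = sqdist_sum V w g"
  define I where "I = Inf (F ` Y)"
  have "bdd_below (F ` Y)" unfolding F_def
    by (rule bdd_belowI2[where m=0]) (rule sqdist_sum_nonneg, rule w)
  then have lower: "\<And>z. z \<in> Y \<Longrightarrow> I \<le> F z" unfolding I_def by (simp add: cInf_lower)
  define \<epsilon> :: "nat \<Rightarrow> real" where "\<epsilon> n = inverse (real (Suc n))" for n
  have "\<exists>y\<in>Y. F y < I + \<epsilon> n" for n
    using cInf_lessD[of "F ` Y" "I + \<epsilon> n"] ne by (auto simp: I_def \<epsilon>_def)
  then obtain y where y: "\<And>n. y n \<in> Y" "\<And>n. F (y n) < I + \<epsilon> n" by metis
  have "(\<lambda>n. 2 * \<epsilon> n / sum w V) \<longlonglongrightarrow> 2 * 0 / sum w V"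
    unfolding \<epsilon>_def using W by (intro tendsto_intros LIMSEQ_inverse_real_of_nat) auto
  moreover have "(dist (y m) (y n))\<^sup>2 \<le> 2 * \<epsilon> m / sum w V + 2 * \<epsilon> n / sum w V" for m n
  proof -
    have "sum w V * (dist (y m) (y n))\<^sup>2 \<le> 2 * \<epsilon> m + 2 * \<epsilon> n"
      using sqdist_sum_dist_squared_le[where w=w and I=I, OF cat geo g w _ y(1)[of m] y(1)[of n]] lower y(2)[of m] y(2)[of n]
      unfolding F_def by fastforce
    then show ?thesis using W by (simp add: field_simps)
  qed
  ultimately have "Cauchy y" by (intro Cauchy_of_dist_squared_le) simp_all
  then obtain b where b: "b \<in> Y" and lim: "y \<longlonglongrightarrow> b"
    using cY y(1) unfolding complete_def by blast
  have "(\<lambda>n. F (y n)) \<longlonglongrightarrow> F b"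
    unfolding F_def sqdist_sum_def by (intro tendsto_intros lim)
  moreover have "(\<lambda>n. I + \<epsilon> n) \<longlonglongrightarrow> I + 0"
    unfolding \<epsilon>_def by (intro tendsto_intros LIMSEQ_inverse_real_of_nat)
  ultimately have "F b \<le> I + 0"
    by (rule LIMSEQ_le) (use y(2) less_imp_le in blast)
  then show ?thesis using b lower unfolding F_def by force
qed

lemma sqdist_sum_variance_ineq:
  assumes geo: "geodesic_space Y" and cat: "CAT0 Y" and g: "g ` V \<subseteq> Y"
    and w: "\<And>c. c \<in> V \<Longrightarrow> w c \<ge> 0"
    and b: "b \<in> Y" and min: "\<forall>z\<in>Y. sqdist_sum V w g b \<le> sqdist_sum V w g z" and z: "z \<in> Y"
  shows "sqdist_sum V w g b + sum w V * (dist b z)\<^sup>2 \<le> sqdist_sum V w g z"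
proof -
  obtain \<gamma> where \<gamma>: "geodesic_seg Y \<gamma> b z" using geo b z unfolding geodesic_space_def by blast
  define K where "K = sum w V * (dist b z)\<^sup>2"
  define D where "D = sqdist_sum V w g z - sqdist_sum V w g b"
  have "(1 - t) * K \<le> D" if t: "0 < t" "t \<le> 1" for t
  proof -
    have "sqdist_sum V w g b \<le> sqdist_sum V w g (\<gamma> (t * dist b z))"
      using min geodesic_seg_point_in[OF \<gamma>] t by simp
    also have "\<dots> \<le> (1 - t) * sqdist_sum V w g b + t * sqdist_sum V w g z - t * (1 - t) * K"
      using sqdist_sum_geodesic_le[where w=w and t=t, OF cat geo g w b z \<gamma>] t
      unfolding K_def by (simp add: mult.assoc)
    finally have "t * ((1 - t) * K) \<le> t * D" unfolding D_def by (simp add: algebra_simps)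
    then show ?thesis using t by simp
  qed
  then have "K \<le> D"
    by (intro tendsto_le[OF _ tendsto_const, of "at_right 0" "\<lambda>t. (1 - t) * K", simplified])
      (auto intro!: tendsto_eq_intros eventually_at_rightI[of 0 1])
  then show ?thesis unfolding K_def D_def by simp
qed

lemma sqdist_sum_variance_eq_euclidean:
  fixes g :: "'v \<Rightarrow> 'n::real_inner"
  assumes W: "sum w V > 0"
  defines "b \<equiv> (1 / sum w V) *\<^sub>R (\<Sum>c\<in>V. w c *\<^sub>R g c)"
  shows "sqdist_sum V w g b + sum w V * (dist b z)\<^sup>2 = sqdist_sum V w g z"
proof -
  define S where "S = (\<Sum>c\<in>V. w c *\<^sub>R g c)"
  define A where "A = (\<Sum>c\<in>V. w c * (g c \<bullet> g c))"
  have F: "sqdist_sum V w g x = A - 2 * (S \<bullet> x) + sum w V * (x \<bullet> x)" for x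
  proof -
    have "sqdist_sum V w g x = (\<Sum>c\<in>V. w c * (g c \<bullet> g c) - 2 * (w c * (g c \<bullet> x)) + w c * (x \<bullet> x))"
      unfolding sqdist_sum_def dist_norm power2_norm_eq_inner
      by (intro sum.cong) (simp_all add: inner_diff_left inner_diff_right inner_commute algebra_simps)
    also have "\<dots> = A - 2 * (S \<bullet> x) + sum w V * (x \<bullet> x)"
      unfolding A_def S_def
      by (simp add: sum.distrib sum_subtractf sum_distrib_left sum_distrib_right inner_sum_left)
    finally show ?thesis .
  qed
  have "S = sum w V *\<^sub>R b" unfolding b_def S_def using W by simp
  then show ?thesis
    unfolding F dist_norm power2_norm_eq_inner
    by (simp add: inner_diff_left inner_diff_right inner_commute algebra_simps)
qed

lemma bar_eqI:
  assumes b: "b \<in> Y" and W: "sum (vweight Ed ori ext mE) V > 0"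
    and var: "\<And>z. z \<in> Y \<Longrightarrow> sqdist_sum V (vweight Ed ori ext mE) g b
                  + sum (vweight Ed ori ext mE) V * (dist b z)\<^sup>2 \<le> sqdist_sum V (vweight Ed ori ext mE) g z"
  shows "bar Y V Ed ori ext mE g = b"
  unfolding bar_def
proof (rule the_equality)
  let ?F = "sqdist_sum V (vweight Ed ori ext mE) g"
  have "?F b \<le> ?F z" if "z \<in> Y" for z
    using var[OF that] W by (smt (verit) mult_nonneg_nonneg zero_le_power2)
  then show "b \<in> Y \<and> (\<forall>z\<in>Y. (\<Sum>c\<in>V. vweight Ed ori ext mE c * (dist (g c) b)\<^sup>2)
                            \<le> (\<Sum>c\<in>V. vweight Ed ori ext mE c * (dist (g c) z)\<^sup>2))"
    using b unfolding sqdist_sum_def by blast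
next
  fix y assume y: "y \<in> Y \<and> (\<forall>z\<in>Y. (\<Sum>c\<in>V. vweight Ed ori ext mE c * (dist (g c) y)\<^sup>2)
                                  \<le> (\<Sum>c\<in>V. vweight Ed ori ext mE c * (dist (g c) z)\<^sup>2))"
  then have "sqdist_sum V (vweight Ed ori ext mE) g y \<le> sqdist_sum V (vweight Ed ori ext mE) g b"
    using b unfolding sqdist_sum_def by blast
  with var[of y] y have "sum (vweight Ed ori ext mE) V * (dist b y)\<^sup>2 \<le> 0" by linarith
  then show "y = b" using W by (simp add: mult_le_0_iff)
qed

lemma double_sum_sqdist_eq:
  "(\<Sum>c\<in>V. \<Sum>c'\<in>V. w c * w c' * (dist (g c) (g c'))\<^sup>2) = (\<Sum>c\<in>V. w c * sqdist_sum V w g (g c))"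
  unfolding sqdist_sum_def sum_distrib_left by (subst sum.swap) (simp add: algebra_simps dist_commute)

lemma sum_variance_terms_eq:
  "(\<Sum>c\<in>V. w c * (sqdist_sum V w g b + sum w V * (dist b (g c))\<^sup>2))
     = 2 * sum w V * sqdist_sum V w g b"
proof -
  have "(\<Sum>c\<in>V. w c * sqdist_sum V w g b) = sum w V * sqdist_sum V w g b"
    by (simp add: sum_distrib_right)
  moreover have "(\<Sum>c\<in>V. w c * (sum w V * (dist b (g c))\<^sup>2)) = sum w V * sqdist_sum V w g b"
    by (simp add: sqdist_sum_def sum_distrib_left dist_commute algebra_simps)
  ultimately show ?thesis by (simp add: distrib_left sum.distrib)
qed

lemma weighted_graphD:
  assumes "weighted_graph V Ed ori ext mE"
  shows "finite V" "\<And>c. c \<in> V \<Longrightarrow> vweight Ed ori ext mE c > 0"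
    "sum (vweight Ed ori ext mE) V > 0" "energy Ed ori ext mE g \<ge> 0"
  using assms unfolding weighted_graph_def energy_def
  by (auto intro!: sum_pos sum_nonneg simp: less_imp_le)

lemma Fgro_eq: "Fgro V Ed ori ext mE g =
   (\<Sum>c\<in>V. \<Sum>c'\<in>V. vweight Ed ori ext mE c * vweight Ed ori ext mE c' * (dist (g c) (g c'))\<^sup>2)
     / (2 * sum (vweight Ed ori ext mE) V)"
  unfolding Fgro_def tweight_def by simp

lemma RQgro_nonneg:
  assumes "weighted_graph V Ed ori ext mE"
  shows "RQgro V Ed ori ext mE g \<ge> 0"
  using weighted_graphD[OF assms]
  unfolding RQgro_def Fgro_eq
  by (intro divide_nonneg_nonneg sum_nonneg mult_nonneg_nonneg) (auto intro: less_imp_le)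

lemma RQgro_le_RQ:
  assumes G: "weighted_graph V Ed ori ext mE" and Y: "complete_geodesic_CAT0 Y"
    and g: "nonconst_map Y V g"
  shows "RQgro V Ed ori ext mE g \<le> RQ Y V Ed ori ext mE g"
proof -
  let ?w = "vweight Ed ori ext mE"
  let ?F = "sqdist_sum V ?w g"
  note G = weighted_graphD[OF G]
  have w: "\<And>c. c \<in> V \<Longrightarrow> ?w c \<ge> 0" using G(2) less_imp_le by blast
  have gY: "g ` V \<subseteq> Y" and nonconst: "\<exists>c\<in>V. \<exists>c'\<in>V. g c \<noteq> g c'"
    using g unfolding nonconst_map_def by auto
  have Y': "complete Y" "geodesic_space Y" "CAT0 Y" "Y \<noteq> {}"
    using Y unfolding complete_geodesic_CAT0_def by auto
  obtain b where b: "b \<in> Y" and min: "\<forall>z\<in>Y. ?F b \<le> ?F z"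
    using sqdist_sum_has_minimizer[OF Y' gY w G(3)] by blast
  have var: "\<And>z. z \<in> Y \<Longrightarrow> ?F b + sum ?w V * (dist b z)\<^sup>2 \<le> ?F z"
    using sqdist_sum_variance_ineq[OF Y'(2,3) gY w b min] by blast
  have bar: "bar Y V Ed ori ext mE g = b" by (rule bar_eqI[OF b G(3) var])
  obtain c0 where c0: "c0 \<in> V" "g c0 \<noteq> b" using nonconst by metis
  have "2 * sum ?w V * ?F b = (\<Sum>c\<in>V. ?w c * (?F b + sum ?w V * (dist b (g c))\<^sup>2))"
    by (rule sum_variance_terms_eq[symmetric])
  also have "\<dots> \<le> (\<Sum>c\<in>V. ?w c * ?F (g c))"
    using var gY w by (intro sum_mono mult_left_mono) auto
  finally have "?F b \<le> Fgro V Ed ori ext mE g"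
    unfolding Fgro_eq double_sum_sqdist_eq using G(3) by (simp add: field_simps)
  moreover have "?F b > 0"
    unfolding sqdist_sum_def using c0 G(2) w by (intro sum_pos2[OF G(1) c0(1)]) auto
  ultimately have "energy Ed ori ext mE g / Fgro V Ed ori ext mE g \<le> energy Ed ori ext mE g / ?F b"
    using G(4) by (intro divide_left_mono) auto
  then show ?thesis unfolding RQgro_def RQ_def bar sqdist_sum_def .
qed

lemma RQgro_eq_RQ_euclidean:
  assumes G: "weighted_graph V Ed ori ext mE"
  shows "RQgro V Ed ori ext mE (g :: 'v \<Rightarrow> 'n::real_inner) = RQ (UNIV :: 'n set) V Ed ori ext mE g"
proof -
  let ?w = "vweight Ed ori ext mE"
  let ?F = "sqdist_sum V ?w g"
  note G = weighted_graphD[OF G]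
  define b where "b = (1 / sum ?w V) *\<^sub>R (\<Sum>c\<in>V. ?w c *\<^sub>R g c)"
  have var: "\<And>z. ?F b + sum ?w V * (dist b z)\<^sup>2 = ?F z"
    unfolding b_def using sqdist_sum_variance_eq_euclidean[OF G(3)] by blast
  have bar: "bar (UNIV :: 'n set) V Ed ori ext mE g = b"
    by (rule bar_eqI) (use var G(3) in auto)
  have "2 * sum ?w V * ?F b = (\<Sum>c\<in>V. ?w c * ?F (g c))"
    unfolding sum_variance_terms_eq[symmetric] var ..
  then have "?F b = Fgro V Ed ori ext mE g"
    unfolding Fgro_eq double_sum_sqdist_eq using G(3) by (simp add: field_simps)
  then show ?thesis unfolding RQgro_def RQ_def bar sqdist_sum_def by simp
qed

theorem mainTheorem10:
  fixes V :: "'v set" and Ed :: "'e set" and ori ext :: "'e \<Rightarrow> 'v" and mE :: "'e \<Rightarrow> real"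
    and Y :: "'y::metric_space set"
  assumes "weighted_graph V Ed ori ext mE"
    and "complete_geodesic_CAT0 Y"
  shows "lambda_gro V Ed ori ext mE Y \<le> lambda_spec V Ed ori ext mE Y \<and>
         lambda_gro V Ed ori ext mE (UNIV :: 'n::euclidean_space set)
           = lambda_spec V Ed ori ext mE (UNIV :: 'n set)"
proof
  show "lambda_gro V Ed ori ext mE Y \<le> lambda_spec V Ed ori ext mE Y"
  proof (cases "\<exists>g. nonconst_map Y V g")
    case True
    show ?thesis unfolding lambda_gro_def lambda_spec_def
    proof (rule cInf_mono)
      show "bdd_below {RQgro V Ed ori ext mE g |g. nonconst_map Y V g}"
        using RQgro_nonneg[OF assms(1)] by (intro bdd_belowI[where m=0]) auto
    qed (use True RQgro_le_RQ[OF assms] in blast)+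
  qed (simp add: lambda_gro_def lambda_spec_def)
  show "lambda_gro V Ed ori ext mE (UNIV :: 'n set) = lambda_spec V Ed ori ext mE (UNIV :: 'n set)"
    unfolding lambda_gro_def lambda_spec_def RQgro_eq_RQ_euclidean[OF assms(1)] ..
qed

end
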